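(* Let $H=(V,E,C,\ell)$ be an edge-colored graph (every edge contains exactly two nodes), let $x$ be a feasible solution of the \textsc{MinECC} LP relaxation with $x_e=\max_{v\in e}x_v^{\ell(e)}$, and let $Y$ be the output of GenColorRound applied to $x$ with interval $I=(\frac12,\frac78)$. If $e\in E$ satisfies $x_e\notin(\frac18,\frac34)$, then $\Pr[e\in\mathcal M_Y]\le\frac43 x_e$.
   Context: An edge-colored hypergraph is $H=(V,E,C,\ell)$ with node set $V$, a multiset $E$ of nonempty subsets of $V$, colors $C=[k]$, $\ell\colon E\to C$, weights $w_e\ge0$. A node coloring $Y\colon V\to C$ makes a mistake at $e$ ($e\in\mathcal M_Y$) if some $v\in e$ has $Y[v]\ne\ell(e)$. The \textsc{MinECC} LP relaxation: minimize $\sum_e w_e x_e$ subject to $\sum_{i=1}^k x_v^i=k-1$ for all $v$; $x_e\ge x_v^{\ell(e)}$ for $v\in e$; $0\le x_v^i\le1$; $0\le x_e\le1$. GenColorRound with interval $I$, applied to a feasible LP solution $x$: draw $\rho$ uniformly from $I$ and, independently, a uniformly random permutation $\pi$ of $[k]$; let $S_i=\{v: x_v^i<\rho\}$ (color $i$ wants $v$ if $x_v^i<\rho$); for $v\in\bigcup_iS_i$ set $Y[v]=\pi(j)$ with $j$ the largest index such that $v\in S_{\pi(j)}$; other nodes get an arbitrary color. *)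

theory Defs
  imports "HOL-Probability.Probability"
begin

text \<open>Edge-colored hypergraph with node set V, edge index set Es (edges form a multiset,
  so they are indexed), edge map ends, colors {1..k}, edge colors lab, weights w.\<close>

definition edge_colored_hypergraph ::
  "'v set \<Rightarrow> 'e set \<Rightarrow> ('e \<Rightarrow> 'v set) \<Rightarrow> nat \<Rightarrow> ('e \<Rightarrow> nat) \<Rightarrow> ('e \<Rightarrow> real) \<Rightarrow> bool" where
  "edge_colored_hypergraph V Es ends k lab w \<longleftrightarrow>
     finite V \<and> finite Es \<and>
     (\<forall>e\<in>Es. ends e \<noteq> {} \<and> ends e \<subseteq> V \<and> lab e \<in> {1..k} \<and> w e \<ge> 0)"

definition is_graph :: "'e set \<Rightarrow> ('e \<Rightarrow> 'v set) \<Rightarrow> bool" where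
  "is_graph Es ends \<longleftrightarrow> (\<forall>e\<in>Es. card (ends e) = 2)"

text \<open>Feasibility for the MinECC LP relaxation; x v i is x_v^i, xe e is x_e.\<close>
definition minecc_lp_feasible ::
  "'v set \<Rightarrow> 'e set \<Rightarrow> ('e \<Rightarrow> 'v set) \<Rightarrow> nat \<Rightarrow> ('e \<Rightarrow> nat)
   \<Rightarrow> ('v \<Rightarrow> nat \<Rightarrow> real) \<Rightarrow> ('e \<Rightarrow> real) \<Rightarrow> bool" where
  "minecc_lp_feasible V Es ends k lab x xe \<longleftrightarrow>
     (\<forall>v\<in>V. (\<Sum>i\<in>{1..k}. x v i) = real k - 1) \<and>
     (\<forall>e\<in>Es. \<forall>v\<in>ends e. xe e \<ge> x v (lab e)) \<and>
     (\<forall>v\<in>V. \<forall>i\<in>{1..k}. 0 \<le> x v i \<and> x v i \<le> 1) \<and>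
     (\<forall>e\<in>Es. 0 \<le> xe e \<and> xe e \<le> 1)"

text \<open>Color i wants v iff x v i < rho; v gets \<sigma> j for the largest j with v in S_(\<sigma> j);
  nodes wanted by no color get the (arbitrary) color dflt v.\<close>
definition gen_color_round ::
  "nat \<Rightarrow> ('v \<Rightarrow> nat \<Rightarrow> real) \<Rightarrow> ('v \<Rightarrow> nat) \<Rightarrow> real \<Rightarrow> (nat \<Rightarrow> nat) \<Rightarrow> 'v \<Rightarrow> nat" where
  "gen_color_round k x dflt rho \<sigma> v =
     (if \<exists>j\<in>{1..k}. x v (\<sigma> j) < rho
      then \<sigma> (GREATEST j. j \<in> {1..k} \<and> x v (\<sigma> j) < rho)
      else dflt v)"

definition mistake :: "('e \<Rightarrow> 'v set) \<Rightarrow> ('e \<Rightarrow> nat) \<Rightarrow> ('v \<Rightarrow> nat) \<Rightarrow> 'e \<Rightarrow> bool" where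
  "mistake ends lab Y e \<longleftrightarrow> (\<exists>v\<in>ends e. Y v \<noteq> lab e)"

definition prob_mistake ::
  "nat \<Rightarrow> ('v \<Rightarrow> nat \<Rightarrow> real) \<Rightarrow> ('v \<Rightarrow> nat) \<Rightarrow> real \<Rightarrow> real
   \<Rightarrow> ('e \<Rightarrow> 'v set) \<Rightarrow> ('e \<Rightarrow> nat) \<Rightarrow> 'e \<Rightarrow> real" where
  "prob_mistake k x dflt a b ends lab e =
     measure_pmf.expectation (pmf_of_set {\<sigma>. \<sigma> permutes {1..k}})
       (\<lambda>\<sigma>. measure (uniform_measure lborel {a<..<b})
               {rho. mistake ends lab (gen_color_round k x dflt rho \<sigma>) e})"

end

theory Submission
  imports Defs
begin

text \<open>If x_e \<ge> 3/4 the bound is trivial, since a probability is at most 1 \<le> 4/3 x_e.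
  If x_e \<le> 1/8, both endpoints v of e have x_v^c \<le> 1/8 for c = \<ell>(e), so the LP constraint
  \<Sum>_i x_v^i = k - 1 forces x_v^i \<ge> 7/8 for every other colour i. For every threshold in
  (1/2, 7/8), c is then the only colour wanting either endpoint, so GenColorRound colours the
  whole edge with c and the mistake probability is 0.\<close>

lemma expectation_pmf_of_set_le:
  assumes "finite S" "S \<noteq> {}" "\<And>s. s \<in> S \<Longrightarrow> f s \<le> (b::real)"
  shows "measure_pmf.expectation (pmf_of_set S) f \<le> b"
proof -
  have "measure_pmf.expectation (pmf_of_set S) f = sum f S / card S"
    using assms by (simp add: integral_pmf_of_set)
  also have "\<dots> \<le> (card S * b) / card S"
    using assms sum_bounded_above[of S f b] by (intro divide_right_mono) auto
  also have "\<dots> = b" using assms by simp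
  finally show ?thesis .
qed

lemma expectation_pmf_of_set_eq_0:
  assumes "finite S" "S \<noteq> {}" "\<And>s. s \<in> S \<Longrightarrow> f s = (0::real)"
  shows "measure_pmf.expectation (pmf_of_set S) f = 0"
  using assms by (simp add: integral_pmf_of_set)

lemma measure_uniform_measure_greaterThanLessThan_le_1:
  assumes "a < (b::real)"
  shows "measure (uniform_measure lborel {a<..<b}) B \<le> 1"
proof -
  have "prob_space (uniform_measure lborel {a<..<b})"
    using assms by (intro prob_space_uniform_measure) auto
  then show ?thesis by (rule prob_space.prob_le_1)
qed

lemma measure_uniform_measure_disjoint:
  assumes "A \<in> sets M" "A \<inter> B = {}"
  shows "measure (uniform_measure M A) B = 0"
proof (cases "B \<in> sets M")
  case True
  then show ?thesis using assms by (simp add: measure_def)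
next
  case False
  then show ?thesis by (intro measure_notin_sets) simp
qed

lemma permutations_nonempty_finite:
  "finite {\<sigma>. \<sigma> permutes {1..k::nat}}" "{\<sigma>. \<sigma> permutes {1..k::nat}} \<noteq> {}"
  using finite_permutations[of "{1..k}"] permutes_id[of "{1..k}"] by (simp, blast)

lemma prob_mistake_le_1:
  assumes "a < b"
  shows "prob_mistake k x dflt a b ends lab e \<le> 1"
  unfolding prob_mistake_def
  using permutations_nonempty_finite assms
  by (intro expectation_pmf_of_set_le measure_uniform_measure_greaterThanLessThan_le_1)

lemma lp_other_colours_large:
  fixes y :: "nat \<Rightarrow> real"
  assumes sum_y: "(\<Sum>j\<in>{1..k}. y j) = real k - 1"
    and le_1: "\<And>j. j \<in> {1..k} \<Longrightarrow> y j \<le> 1"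
    and c: "c \<in> {1..k}" "y c \<le> \<delta>"
    and i: "i \<in> {1..k}" "i \<noteq> c"
  shows "y i \<ge> 1 - \<delta>"
proof -
  have "(\<Sum>j\<in>{1..k}. y j) = y c + (y i + (\<Sum>j\<in>{1..k} - {c} - {i}. y j))"
    using c i by (simp add: sum.remove)
  moreover have "(\<Sum>j\<in>{1..k} - {c} - {i}. y j) \<le> real (card ({1..k} - {c} - {i}))"
    using sum_bounded_above[of "{1..k} - {c} - {i}" y 1] le_1 by auto
  moreover have "real (card ({1..k} - {c} - {i})) = real k - 2"
    using c i by (simp add: of_nat_diff)
  ultimately show ?thesis using sum_y c by linarith
qed

lemma gen_color_round_unique_wanting_colour:
  assumes \<sigma>: "\<sigma> permutes {1..k}" and c: "c \<in> {1..k}" "x v c < rho"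
    and others: "\<And>i. i \<in> {1..k} \<Longrightarrow> i \<noteq> c \<Longrightarrow> rho \<le> x v i"
  shows "gen_color_round k x dflt rho \<sigma> v = c"
proof -
  define P where "P = (\<lambda>j. j \<in> {1..k} \<and> x v (\<sigma> j) < rho)"
  have "inv \<sigma> c \<in> {1..k}" "\<sigma> (inv \<sigma> c) = c"
    using \<sigma> c permutes_inv permutes_in_image permutes_inverses(1) by metis+
  then have ex: "\<exists>j\<in>{1..k}. x v (\<sigma> j) < rho" using c by metis
  define g where "g = (GREATEST j. P j)"
  have "P g"
    unfolding g_def
  proof (rule GreatestI_ex_nat[where b = k])
    show "\<exists>j. P j" using ex unfolding P_def by blast
    show "\<And>j. P j \<Longrightarrow> j \<le> k" unfolding P_def by simp
  qed
  then have greatest: "g \<in> {1..k}" "x v (\<sigma> g) < rho"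
    unfolding P_def by auto
  have "\<sigma> g = c"
  proof (rule ccontr)
    assume "\<sigma> g \<noteq> c"
    moreover have "\<sigma> g \<in> {1..k}"
      using greatest(1) \<sigma> permutes_in_image by metis
    ultimately show False using others greatest(2) by (meson not_le)
  qed
  moreover have "gen_color_round k x dflt rho \<sigma> v = \<sigma> g"
    unfolding gen_color_round_def g_def P_def using ex by simp
  ultimately show ?thesis by simp
qed

lemma prob_mistake_eq_0:
  assumes "a < b"
    and small: "\<And>v. v \<in> ends e \<Longrightarrow> x v (lab e) \<le> a"
    and large: "\<And>v i. v \<in> ends e \<Longrightarrow> i \<in> {1..k} \<Longrightarrow> i \<noteq> lab e \<Longrightarrow> b \<le> x v i"
    and "lab e \<in> {1..k}"
  shows "prob_mistake k x dflt a b ends lab e = 0"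
  unfolding prob_mistake_def
proof (intro expectation_pmf_of_set_eq_0 permutations_nonempty_finite measure_uniform_measure_disjoint)
  fix \<sigma> assume "\<sigma> \<in> {\<sigma>. \<sigma> permutes {1..k}}"
  then have \<sigma>: "\<sigma> permutes {1..k}" by simp
  have "gen_color_round k x dflt rho \<sigma> v = lab e"
    if "a < rho" "rho < b" "v \<in> ends e" for rho v
  proof (rule gen_color_round_unique_wanting_colour[OF \<sigma> \<open>lab e \<in> {1..k}\<close>])
    show "x v (lab e) < rho" using small[OF \<open>v \<in> ends e\<close>] \<open>a < rho\<close> by linarith
    show "rho \<le> x v i" if "i \<in> {1..k}" "i \<noteq> lab e" for i
      using large[OF \<open>v \<in> ends e\<close> that] \<open>rho < b\<close> by linarith
  qed
  then show "{a<..<b} \<inter> {rho. mistake ends lab (gen_color_round k x dflt rho \<sigma>) e} = {}"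
    unfolding mistake_def by auto
qed simp

theorem lemma2:
  fixes V :: "'v set" and Es :: "'e set" and ends :: "'e \<Rightarrow> 'v set"
    and k :: nat and lab :: "'e \<Rightarrow> nat" and w :: "'e \<Rightarrow> real"
    and x :: "'v \<Rightarrow> nat \<Rightarrow> real" and xe :: "'e \<Rightarrow> real"
    and dflt :: "'v \<Rightarrow> nat" and e :: 'e
  assumes "edge_colored_hypergraph V Es ends k lab w"
    and "is_graph Es ends"
    and "minecc_lp_feasible V Es ends k lab x xe"
    and "\<forall>f\<in>Es. xe f = Max ((\<lambda>v. x v (lab f)) ` ends f)"
    and "\<forall>v. dflt v \<in> {1..k}"
    and "e \<in> Es"
    and "xe e \<notin> {1/8<..<3/4}"
  shows "prob_mistake k x dflt (1/2) (7/8) ends lab e \<le> 4/3 * xe e"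
proof (cases "xe e \<ge> 3/4")
  case True
  have "prob_mistake k x dflt (1/2) (7/8) ends lab e \<le> 1"
    by (rule prob_mistake_le_1) simp
  then show ?thesis using True by linarith
next
  case False
  have c: "lab e \<in> {1..k}" and ends_V: "ends e \<subseteq> V"
    using assms(1,6) unfolding edge_colored_hypergraph_def by auto
  have "xe e \<le> 1/8" using False assms(7) by auto
  then have small: "x v (lab e) \<le> 1/8" if "v \<in> ends e" for v
    using assms(3,6) that unfolding minecc_lp_feasible_def by force
  have large: "7/8 \<le> x v i" if v: "v \<in> ends e" and "i \<in> {1..k}" "i \<noteq> lab e" for v i
  proof -
    have "v \<in> V" using v ends_V by blast
    then have "(\<Sum>j\<in>{1..k}. x v j) = real k - 1" "\<forall>j\<in>{1..k}. x v j \<le> 1"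
      using assms(3) unfolding minecc_lp_feasible_def by auto
    then show ?thesis
      using lp_other_colours_large[of "x v" k "lab e" "1/8" i] c small[OF v] that by simp
  qed
  have "prob_mistake k x dflt (1/2) (7/8) ends lab e = 0"
  proof (rule prob_mistake_eq_0)
    show "x v (lab e) \<le> 1/2" if "v \<in> ends e" for v using small[OF that] by linarith
  qed (use large c in auto)
  then show ?thesis using assms(3,6) unfolding minecc_lp_feasible_def by simp
qed

end
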